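(* Let $k$ be an algebraically closed field of characteristic $0$ and $R$ a finitely generated $k$-algebra which is an $n$-Cayley–Hamilton algebra whose trace takes values in $k$. If the Jacobson radical $J$ of $R$ satisfies $R/J\cong M_n(k)$, then $J=0$.
   Context: An algebra with trace over a commutative ring $A$ is an associative unital $A$-algebra $R$ with an $A$-linear map $t:R\to R$ such that $t(a)b=bt(a)$, $t(ab)=t(ba)$ and $t(t(a)b)=t(a)t(b)$. The formal $n$-characteristic polynomial of $a$ is $\chi^n_a(x)=x^n+\sum_{i=1}^nP_i(t(a),\dots,t(a^i))x^{n-i}$ with $P_i$ the universal rational polynomials expressing elementary symmetric functions via power sums. $R$ is an $n$-Cayley–Hamilton algebra if $t(1)=n$ and $\chi^n_a(a)=0$ for all $a\in R$. *)

theory Defs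
  imports Main "HOL-Computational_Algebra.Polynomial" "Jordan_Normal_Form.Matrix"
begin

definition alg_closed :: "'k::field itself \<Rightarrow> bool" where
  "alg_closed _ \<longleftrightarrow> (\<forall>p :: 'k poly. degree p \<ge> 1 \<longrightarrow> (\<exists>x. poly p x = 0))"

text \<open>A unital associative k-algebra structure on the ring 'r: a ring homomorphism
  from k into the centre of 'r; scalar multiplication is c . r = phi c * r.\<close>
definition k_algebra :: "('k::field \<Rightarrow> 'r::ring_1) \<Rightarrow> bool" where
  "k_algebra \<phi> \<longleftrightarrow> \<phi> 1 = 1 \<and> (\<forall>a b. \<phi> (a + b) = \<phi> a + \<phi> b)
     \<and> (\<forall>a b. \<phi> (a * b) = \<phi> a * \<phi> b) \<and> (\<forall>a r. \<phi> a * r = r * \<phi> a)"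

inductive_set gen_subalg :: "('k::field \<Rightarrow> 'r::ring_1) \<Rightarrow> 'r set \<Rightarrow> 'r set"
  for \<phi> S where
  scal: "\<phi> c \<in> gen_subalg \<phi> S"
| gen: "s \<in> S \<Longrightarrow> s \<in> gen_subalg \<phi> S"
| add: "x \<in> gen_subalg \<phi> S \<Longrightarrow> y \<in> gen_subalg \<phi> S \<Longrightarrow> x + y \<in> gen_subalg \<phi> S"
| mult: "x \<in> gen_subalg \<phi> S \<Longrightarrow> y \<in> gen_subalg \<phi> S \<Longrightarrow> x * y \<in> gen_subalg \<phi> S"

definition finitely_generated :: "('k::field \<Rightarrow> 'r::ring_1) \<Rightarrow> bool" where
  "finitely_generated \<phi> \<longleftrightarrow> (\<exists>S. finite S \<and> gen_subalg \<phi> S = UNIV)"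

text \<open>Algebra with trace whose trace takes values in k: t = phi o tr with tr : R -> k.\<close>
definition algebra_with_trace :: "('k::field \<Rightarrow> 'r::ring_1) \<Rightarrow> ('r \<Rightarrow> 'k) \<Rightarrow> bool" where
  "algebra_with_trace \<phi> tr \<longleftrightarrow>
     (\<forall>x y. tr (x + y) = tr x + tr y) \<and> (\<forall>c x. tr (\<phi> c * x) = c * tr x)
     \<and> (\<forall>a b. \<phi> (tr a) * b = b * \<phi> (tr a))
     \<and> (\<forall>a b. tr (a * b) = tr (b * a))
     \<and> (\<forall>a b. tr (\<phi> (tr a) * b) = tr a * tr b)"

text \<open>Elementary symmetric functions expressed in power sums p 1, p 2, ... via Newton's
  identities: i e_i = sum_{j=1..i} (-1)^(j-1) e_(i-j) p_j.\<close>
fun newton_e :: "(nat \<Rightarrow> 'k::field_char_0) \<Rightarrow> nat \<Rightarrow> 'k" where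
  "newton_e p 0 = 1"
| "newton_e p (Suc i) =
     (\<Sum>j\<in>{1..Suc i}. (-1) ^ (j - 1) * newton_e p (Suc i - j) * p j) / of_nat (Suc i)"

definition char_poly_eval :: "('k::field_char_0 \<Rightarrow> 'r::ring_1) \<Rightarrow> ('r \<Rightarrow> 'k) \<Rightarrow> nat \<Rightarrow> 'r \<Rightarrow> 'r" where
  "char_poly_eval \<phi> tr n a = a ^ n +
     (\<Sum>i\<in>{1..n}. \<phi> ((-1) ^ i * newton_e (\<lambda>j. tr (a ^ j)) i) * a ^ (n - i))"

definition cayley_hamilton :: "('k::field_char_0 \<Rightarrow> 'r::ring_1) \<Rightarrow> ('r \<Rightarrow> 'k) \<Rightarrow> nat \<Rightarrow> bool" where
  "cayley_hamilton \<phi> tr n \<longleftrightarrow> algebra_with_trace \<phi> tr \<and> \<phi> (tr 1) = of_nat n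
     \<and> (\<forall>a. char_poly_eval \<phi> tr n a = 0)"

definition left_ideal :: "'r::ring_1 set \<Rightarrow> bool" where
  "left_ideal I \<longleftrightarrow> 0 \<in> I \<and> (\<forall>x\<in>I. \<forall>y\<in>I. x + y \<in> I) \<and> (\<forall>x\<in>I. - x \<in> I)
     \<and> (\<forall>r. \<forall>x\<in>I. r * x \<in> I)"

definition maximal_left_ideal :: "'r::ring_1 set \<Rightarrow> bool" where
  "maximal_left_ideal I \<longleftrightarrow> left_ideal I \<and> I \<noteq> UNIV
     \<and> (\<forall>L. left_ideal L \<and> I \<subseteq> L \<and> L \<noteq> UNIV \<longrightarrow> L = I)"

definition jacobson_radical :: "'r::ring_1 itself \<Rightarrow> 'r set" where
  "jacobson_radical _ = \<Inter> {I. maximal_left_ideal I}"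

text \<open>R/J isomorphic to M_n(k) as k-algebras: a surjective k-algebra homomorphism
  R -> M_n(k) with kernel J.\<close>
definition quotient_iso_Mn :: "('k::field \<Rightarrow> 'r::ring_1) \<Rightarrow> nat \<Rightarrow> 'r set \<Rightarrow> bool" where
  "quotient_iso_Mn \<phi> n J \<longleftrightarrow> (\<exists>f :: 'r \<Rightarrow> 'k mat.
     (\<forall>x. f x \<in> carrier_mat n n)
     \<and> (\<forall>x y. f (x + y) = f x + f y)
     \<and> (\<forall>x y. f (x * y) = f x * f y)
     \<and> f 1 = 1\<^sub>m n
     \<and> (\<forall>c. f (\<phi> c) = c \<cdot>\<^sub>m 1\<^sub>m n)
     \<and> f ` UNIV = carrier_mat n n
     \<and> {x. f x = 0\<^sub>m n n} = J)"

end

theory Submission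
  imports Defs
begin

text \<open>Let f be the surjection of R onto M_n(k) with kernel J, and fix a lift u of
  diag(0, 1, ..., n - 1). The formal characteristic polynomial of any
  lift v of this matrix has coefficients in k and vanishes at 0, ..., n - 1, so it equals
  P = X (X - 1) ... (X - (n - 1)) and P(v) = 0. Evaluating the Lagrange basis of P at u gives
  idempotents e_i (proj i) with sum 1 lifting the diagonal matrix units, on which u acts by the scalar i.
  For z in the kernel put x = e_i z e_i. Then u + x is again a lift, and multiplying
  P(u + x) = 0 by e_i shows x = x^2 h with h commuting with x, so xh is an idempotent in the
  kernel on which u acts by i. Adding a multiple of xh to u yields another lift having a
  non-root of P as an eigenvalue, which forces xh = 0 and hence x = x (xh) = 0. Lifts of the
  off-diagonal matrix units move e_i z e_j into such a corner, so z = (SUM i j. e_i z e_j) = 0.\<close>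

definition root_poly :: "(nat \<Rightarrow> 'k::comm_ring_1) \<Rightarrow> nat set \<Rightarrow> 'k poly" where
  "root_poly \<alpha> I = (\<Prod>l\<in>I. [:- \<alpha> l, 1:])"

lemma poly_root_poly: "poly (root_poly \<alpha> I) x = (\<Prod>l\<in>I. x - \<alpha> l)"
  by (simp add: root_poly_def poly_prod)

lemma poly_root_poly_eq_0_iff:
  fixes \<alpha> :: "nat \<Rightarrow> 'k::idom"
  assumes "finite I"
  shows "poly (root_poly \<alpha> I) x = 0 \<longleftrightarrow> x \<in> \<alpha> ` I"
  using assms by (auto simp: poly_root_poly)

lemma degree_root_poly:
  fixes \<alpha> :: "nat \<Rightarrow> 'k::idom"
  shows "degree (root_poly \<alpha> I) = card I"
  unfolding root_poly_def
  by (cases "finite I") (simp_all add: degree_prod_eq_sum_degree)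

lemma coeff_root_poly_card:
  fixes \<alpha> :: "nat \<Rightarrow> 'k::idom"
  shows "coeff (root_poly \<alpha> I) (card I) = 1"
  using lead_coeff_prod[of "\<lambda>l. [:- \<alpha> l, 1:]" I]
  by (simp add: root_poly_def[symmetric] degree_root_poly)

lemma root_poly_remove:
  "finite I \<Longrightarrow> i \<in> I \<Longrightarrow> root_poly \<alpha> I = [:- \<alpha> i, 1:] * root_poly \<alpha> (I - {i})"
  unfolding root_poly_def by (rule prod.remove)

lemma monic_eq_root_poly:
  fixes p :: "'k::idom poly"
  assumes "finite I" "inj_on \<alpha> I" "degree p \<le> card I" "coeff p (card I) = 1"
    and "\<And>l. l \<in> I \<Longrightarrow> poly p (\<alpha> l) = 0"
  shows "p = root_poly \<alpha> I"
proof (rule poly_eqI_degree_lead_coeff[where n = "card I" and A = "\<alpha> ` I"])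
  show "card I \<le> card (\<alpha> ` I)"
    using assms(2) by (simp add: card_image)
  show "poly p z = poly (root_poly \<alpha> I) z" if "z \<in> \<alpha> ` I" for z
    using that assms(1,5) by (auto simp: poly_root_poly_eq_0_iff)
qed (use assms in \<open>simp_all add: degree_root_poly coeff_root_poly_card\<close>)

definition lagrange_basis :: "(nat \<Rightarrow> 'k::field) \<Rightarrow> nat set \<Rightarrow> nat \<Rightarrow> 'k poly" where
  "lagrange_basis \<alpha> I i =
     Polynomial.smult (inverse (poly (root_poly \<alpha> (I - {i})) (\<alpha> i))) (root_poly \<alpha> (I - {i}))"

lemma poly_lagrange_basis:
  fixes \<alpha> :: "nat \<Rightarrow> 'k::field"
  assumes "finite I" "inj_on \<alpha> I" "j \<in> I"
  shows "poly (lagrange_basis \<alpha> I i) (\<alpha> j) = (if j = i then 1 else 0)"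
proof -
  have "\<alpha> j \<in> \<alpha> ` (I - {i}) \<longleftrightarrow> j \<noteq> i"
    using assms(2,3) by (auto dest: inj_onD)
  then have "poly (root_poly \<alpha> (I - {i})) (\<alpha> j) = 0 \<longleftrightarrow> j \<noteq> i"
    using assms(1) by (simp add: poly_root_poly_eq_0_iff)
  then show ?thesis
    by (auto simp: lagrange_basis_def)
qed

lemma sum_lagrange_basis:
  fixes \<alpha> :: "nat \<Rightarrow> 'k::field"
  assumes "finite I" "inj_on \<alpha> I" "I \<noteq> {}"
  shows "(\<Sum>i\<in>I. lagrange_basis \<alpha> I i) = 1"
proof (rule poly_eqI_degree[where A = "\<alpha> ` I"])
  have card: "card (\<alpha> ` I) = card I"
    using assms(2) by (rule card_image)
  show "poly (\<Sum>i\<in>I. lagrange_basis \<alpha> I i) x = poly 1 x" if "x \<in> \<alpha> ` I" for x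
    using that assms by (auto simp: poly_sum poly_lagrange_basis)
  have pos: "card I > 0"
    using assms(1,3) by (simp add: card_gt_0_iff)
  have "degree (lagrange_basis \<alpha> I i) \<le> card I - 1" if "i \<in> I" for i
  proof -
    have "degree (lagrange_basis \<alpha> I i) \<le> degree (root_poly \<alpha> (I - {i}))"
      unfolding lagrange_basis_def by (rule degree_smult_le)
    then show ?thesis
      using that by (simp add: degree_root_poly card_Diff_singleton)
  qed
  then have "degree (\<Sum>i\<in>I. lagrange_basis \<alpha> I i) \<le> card I - 1"
    by (intro degree_sum_le) (simp_all add: assms(1))
  then show "degree (\<Sum>i\<in>I. lagrange_basis \<alpha> I i) < card (\<alpha> ` I)"
    using pos card by linarith
  show "degree (1 :: 'k poly) < card (\<alpha> ` I)"
    using pos card by simp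
qed

lemma root_poly_dvd_linear_times_lagrange_basis:
  fixes \<alpha> :: "nat \<Rightarrow> 'k::field"
  assumes "finite I" "i \<in> I"
  shows "root_poly \<alpha> I dvd [:- \<alpha> i, 1:] * lagrange_basis \<alpha> I i"
  unfolding lagrange_basis_def root_poly_remove[OF assms] mult_smult_right
  by (rule dvd_smult) simp

definition formal_char_poly :: "('r \<Rightarrow> 'k::field_char_0) \<Rightarrow> nat \<Rightarrow> 'r::monoid_mult \<Rightarrow> 'k poly" where
  "formal_char_poly tr n b = monom 1 n +
     (\<Sum>i\<in>{1..n}. monom ((-1) ^ i * newton_e (\<lambda>j. tr (b ^ j)) i) (n - i))"

lemma degree_formal_char_poly: "degree (formal_char_poly tr n b) \<le> n"
  unfolding formal_char_poly_def
  by (intro degree_add_le degree_sum_le) (auto intro: order.trans[OF degree_monom_le])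

lemma coeff_formal_char_poly: "coeff (formal_char_poly tr n b) n = 1"
proof -
  have "(\<Sum>i\<in>{1..n}. coeff (monom ((-1) ^ i * newton_e (\<lambda>j. tr (b ^ j)) i) (n - i)) n) = 0"
    by (rule sum.neutral) auto
  then show ?thesis
    by (simp add: formal_char_poly_def coeff_sum)
qed

definition mat_unit :: "nat \<Rightarrow> nat \<Rightarrow> nat \<Rightarrow> 'a::{zero,one} mat" where
  "mat_unit n i j = mat n n (\<lambda>(a, b). if a = i \<and> b = j then 1 else 0)"

lemma mat_unit_carrier [simp]: "mat_unit n i j \<in> carrier_mat n n"
  by (simp add: mat_unit_def)

lemma mat_unit_mult:
  assumes "j < n"
  shows "mat_unit n i j * mat_unit n j k = (mat_unit n i k :: 'a::semiring_1 mat)"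
proof (rule eq_matI)
  fix a b assume "a < dim_row (mat_unit n i k :: 'a mat)" "b < dim_col (mat_unit n i k :: 'a mat)"
  then show "(mat_unit n i j * mat_unit n j k) $$ (a, b) = (mat_unit n i k :: 'a mat) $$ (a, b)"
    using assms by (simp add: mat_unit_def scalar_prod_def if_distrib[of "\<lambda>x. x * _"] cong: if_cong)
qed (simp_all add: mat_unit_def)

lemma mat_diag_indicator: "mat_diag n (\<lambda>m. if m = i then 1 else 0) = mat_unit n i i"
  by (rule eq_matI) (auto simp: mat_diag_def mat_unit_def)

lemma mat_diag_add:
  fixes g h :: "nat \<Rightarrow> 'a::monoid_add"
  shows "mat_diag n g + mat_diag n h = mat_diag n (\<lambda>i. g i + h i)"
  by (rule eq_matI) (auto simp: mat_diag_def)

lemma smult_one_mat_eq_mat_diag: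
  fixes c :: "'a::semiring_1"
  shows "c \<cdot>\<^sub>m 1\<^sub>m n = mat_diag n (\<lambda>_. c)"
  by (rule eq_matI) (auto simp: mat_diag_def)

lemma zero_mat_eq_mat_diag: "0\<^sub>m n n = mat_diag n (\<lambda>_. 0)"
  by (rule eq_matI) (auto simp: mat_diag_def)

lemma mat_diag_eq_iff: "mat_diag n g = mat_diag n h \<longleftrightarrow> (\<forall>i<n. g i = h i)"
proof (intro iffI allI impI)
  fix i assume eq: "mat_diag n g = mat_diag n h" and "i < n"
  from arg_cong[OF eq, of "\<lambda>M. M $$ (i, i)"] \<open>i < n\<close> show "g i = h i"
    by (simp add: mat_diag_def)
qed (auto simp: mat_diag_def)

definition aeval :: "('k::field \<Rightarrow> 'r::ring_1) \<Rightarrow> 'k poly \<Rightarrow> 'r \<Rightarrow> 'r" where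
  "aeval \<phi> p r = (\<Sum>m\<le>degree p. \<phi> (coeff p m) * r ^ m)"

locale k_alg =
  fixes \<phi> :: "'k::field \<Rightarrow> 'r::ring_1"
  assumes k_algebra: "k_algebra \<phi>"
begin

lemma phi_1: "\<phi> 1 = 1" and phi_add: "\<phi> (a + b) = \<phi> a + \<phi> b"
  and phi_mult: "\<phi> (a * b) = \<phi> a * \<phi> b" and phi_central: "\<phi> a * r = r * \<phi> a"
  using k_algebra unfolding k_algebra_def by blast+

lemma phi_0 [simp]: "\<phi> 0 = 0"
  using phi_add[of 0 0] by simp

lemma phi_minus: "\<phi> (- a) = - \<phi> a"
  using phi_add[of a "- a"] by (simp add: minus_unique)

lemma mult_phi_left_commute: "y * (\<phi> c * w) = \<phi> c * (y * w)"
  by (metis mult.assoc phi_central)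

lemma phi_cancel: "c \<noteq> 0 \<Longrightarrow> \<phi> c * z = 0 \<Longrightarrow> z = 0"
  by (metis mult.assoc mult_1 mult_zero_right phi_1 phi_mult left_inverse)

lemma aeval_bound: "degree p \<le> N \<Longrightarrow> aeval \<phi> p r = (\<Sum>m\<le>N. \<phi> (coeff p m) * r ^ m)"
  unfolding aeval_def by (rule sum.mono_neutral_left) (auto simp: coeff_eq_0)

lemma aeval_0 [simp]: "aeval \<phi> 0 r = 0"
  by (simp add: aeval_def)

lemma aeval_add: "aeval \<phi> (p + q) r = aeval \<phi> p r + aeval \<phi> q r"
proof -
  let ?N = "max (degree p) (degree q)"
  have "aeval \<phi> (p + q) r = (\<Sum>m\<le>?N. \<phi> (coeff (p + q) m) * r ^ m)"
    by (rule aeval_bound) (simp add: degree_add_le)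
  also have "\<dots> = (\<Sum>m\<le>?N. \<phi> (coeff p m) * r ^ m) + (\<Sum>m\<le>?N. \<phi> (coeff q m) * r ^ m)"
    by (simp add: phi_add distrib_right sum.distrib)
  also have "\<dots> = aeval \<phi> p r + aeval \<phi> q r"
    using aeval_bound[of p ?N r] aeval_bound[of q ?N r] by simp
  finally show ?thesis .
qed

lemma aeval_sum: "aeval \<phi> (\<Sum>i\<in>A. p i) r = (\<Sum>i\<in>A. aeval \<phi> (p i) r)"
  by (induction A rule: infinite_finite_induct) (auto simp: aeval_add)

lemma aeval_smult: "aeval \<phi> (Polynomial.smult c p) r = \<phi> c * aeval \<phi> p r"
  by (simp add: aeval_bound[OF degree_smult_le] aeval_def sum_distrib_left phi_mult mult.assoc)

lemma aeval_pCons: "aeval \<phi> (pCons a p) r = \<phi> a + r * aeval \<phi> p r"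
proof -
  have "aeval \<phi> (pCons a p) r = (\<Sum>m\<le>Suc (degree p). \<phi> (coeff (pCons a p) m) * r ^ m)"
    by (rule aeval_bound) simp
  also have "\<dots> = \<phi> a + (\<Sum>m\<le>degree p. \<phi> (coeff p m) * r ^ Suc m)"
    by (subst sum.atMost_Suc_shift) simp
  also have "(\<Sum>m\<le>degree p. \<phi> (coeff p m) * r ^ Suc m) = r * aeval \<phi> p r"
    unfolding aeval_def sum_distrib_left
    by (rule sum.cong) (auto simp: phi_central mult.assoc)
  finally show ?thesis .
qed

lemma aeval_const: "aeval \<phi> [:c:] r = \<phi> c"
  by (simp add: aeval_pCons)

lemma aeval_1 [simp]: "aeval \<phi> 1 r = 1"
  by (metis aeval_const one_pCons phi_1)

lemma aeval_linear: "aeval \<phi> [:- c, 1:] r = r - \<phi> c"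
  by (simp add: aeval_pCons phi_1 phi_minus)

lemma aeval_monom: "aeval \<phi> (monom c m) r = \<phi> c * r ^ m"
proof -
  have "aeval \<phi> (monom c m) r = (\<Sum>j\<le>m. \<phi> (coeff (monom c m) j) * r ^ j)"
    by (rule aeval_bound) (simp add: degree_monom_le)
  also have "\<dots> = (\<Sum>j\<le>m. if j = m then \<phi> c * r ^ m else 0)"
    by (rule sum.cong) auto
  finally show ?thesis by simp
qed

lemma aeval_mult: "aeval \<phi> (p * q) r = aeval \<phi> p r * aeval \<phi> q r"
  by (induction p) (simp_all add: aeval_add aeval_smult aeval_pCons distrib_right mult.assoc)

lemma aeval_dvd_eq_0: "p dvd q \<Longrightarrow> aeval \<phi> p r = 0 \<Longrightarrow> aeval \<phi> q r = 0"
  by (elim dvdE) (simp add: aeval_mult)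

lemma aeval_commute: "x * r = r * x \<Longrightarrow> x * aeval \<phi> p r = aeval \<phi> p r * x"
proof (induction p)
  case (pCons a p)
  have "x * (r * aeval \<phi> p r) = r * aeval \<phi> p r * x"
    by (metis mult.assoc pCons.IH pCons.prems)
  then show ?case
    by (simp add: aeval_pCons distrib_left distrib_right phi_central)
qed simp

lemma aeval_eigen: "y * z = \<phi> a * z \<Longrightarrow> aeval \<phi> p y * z = \<phi> (poly p a) * z"
proof (induction p)
  case (pCons c p)
  have "y * aeval \<phi> p y * z = \<phi> (a * poly p a) * z"
    by (metis mult.assoc pCons.IH pCons.prems phi_central phi_mult)
  then show ?case
    by (simp add: aeval_pCons distrib_right phi_add)
qed simp

lemma sum_lagrange_idempotents:
  assumes "finite I" "inj_on \<alpha> I" "I \<noteq> {}"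
  shows "(\<Sum>i\<in>I. aeval \<phi> (lagrange_basis \<alpha> I i) u) = 1"
  using sum_lagrange_basis[OF assms] by (simp flip: aeval_sum)

lemma lagrange_idempotent_eigen:
  assumes "finite I" "i \<in> I" "aeval \<phi> (root_poly \<alpha> I) u = 0"
  shows "u * aeval \<phi> (lagrange_basis \<alpha> I i) u = \<phi> (\<alpha> i) * aeval \<phi> (lagrange_basis \<alpha> I i) u"
proof -
  have "aeval \<phi> ([:- \<alpha> i, 1:] * lagrange_basis \<alpha> I i) u = 0"
    using root_poly_dvd_linear_times_lagrange_basis[OF assms(1,2)] assms(3)
    by (rule aeval_dvd_eq_0)
  then show ?thesis
    unfolding aeval_mult aeval_linear by (simp add: left_diff_distrib)
qed

lemma lagrange_idempotent_idem:
  assumes "finite I" "inj_on \<alpha> I" "i \<in> I" "aeval \<phi> (root_poly \<alpha> I) u = 0"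
  defines "e \<equiv> aeval \<phi> (lagrange_basis \<alpha> I i) u"
  shows "e * e = e"
proof -
  have "e * e = \<phi> (poly (lagrange_basis \<alpha> I i) (\<alpha> i)) * e"
    unfolding e_def
    by (rule aeval_eigen) (rule lagrange_idempotent_eigen[OF assms(1,3,4)])
  then show ?thesis
    using assms(1-3) by (simp add: poly_lagrange_basis phi_1)
qed

end

locale mat_rep = k_alg \<phi> for \<phi> :: "'k::field \<Rightarrow> 'r::ring_1" +
  fixes n :: nat and f :: "'r \<Rightarrow> 'k mat"
  assumes rep_carrier: "f x \<in> carrier_mat n n"
    and rep_add: "f (x + y) = f x + f y"
    and rep_mult: "f (x * y) = f x * f y"
    and rep_scalar: "f (\<phi> c) = c \<cdot>\<^sub>m 1\<^sub>m n"
begin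

lemma rep_0: "f 0 = 0\<^sub>m n n"
  using rep_scalar[of 0] by (simp add: smult_one_mat_eq_mat_diag zero_mat_eq_mat_diag)

lemma rep_diff: "f (a - b) = f a - f b"
proof -
  have "f a = f (a - b) + f b"
    by (metis diff_add_cancel rep_add)
  then show ?thesis
    using rep_carrier[of "a - b"] rep_carrier[of b] by auto
qed

lemma rep_kernel_mult: "f z = 0\<^sub>m n n \<Longrightarrow> f (a * z * b) = 0\<^sub>m n n"
  using rep_carrier[of a] rep_carrier[of b]
  by (simp add: rep_mult right_mult_zero_mat left_mult_zero_mat)

lemma rep_aeval_diag: "f b = mat_diag n \<alpha> \<Longrightarrow> f (aeval \<phi> p b) = mat_diag n (\<lambda>m. poly p (\<alpha> m))"
proof (induction p)
  case 0
  then show ?case by (simp add: rep_0 zero_mat_eq_mat_diag)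
next
  case (pCons a p)
  then show ?case
    by (simp add: aeval_pCons rep_add rep_mult rep_scalar smult_one_mat_eq_mat_diag mat_diag_add)
qed

end

locale ch_rep = mat_rep \<phi> n f for \<phi> :: "'k::field_char_0 \<Rightarrow> 'r::ring_1" and n f +
  fixes tr :: "'r \<Rightarrow> 'k"
  assumes cayley_hamilton: "cayley_hamilton \<phi> tr n"
begin

lemma aeval_formal_char_poly: "aeval \<phi> (formal_char_poly tr n b) b = 0"
proof -
  have "aeval \<phi> (formal_char_poly tr n b) b = char_poly_eval \<phi> tr n b"
    by (simp add: formal_char_poly_def char_poly_eval_def aeval_add aeval_sum aeval_monom phi_1)
  with cayley_hamilton show ?thesis
    unfolding cayley_hamilton_def by simp
qed

lemma n_pos: "n > 0"
proof (rule ccontr)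
  assume "\<not> n > 0"
  then have "char_poly_eval \<phi> tr n 0 = 1"
    by (simp add: char_poly_eval_def)
  with cayley_hamilton show False
    unfolding cayley_hamilton_def by simp
qed

lemma aeval_root_poly_eq_0:
  assumes "inj_on \<alpha> {..<n}" and "f b = mat_diag n \<alpha>"
  shows "aeval \<phi> (root_poly \<alpha> {..<n}) b = 0"
proof -
  have "mat_diag n (\<lambda>m. poly (formal_char_poly tr n b) (\<alpha> m)) = mat_diag n (\<lambda>_. 0)"
    using rep_aeval_diag[OF assms(2), of "formal_char_poly tr n b"]
    by (simp add: aeval_formal_char_poly rep_0 zero_mat_eq_mat_diag)
  then have "formal_char_poly tr n b = root_poly \<alpha> {..<n}"
    using assms(1)
    by (intro monic_eq_root_poly)
      (simp_all add: mat_diag_eq_iff degree_formal_char_poly coeff_formal_char_poly)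
  then show ?thesis
    using aeval_formal_char_poly[of b] by simp
qed

end

locale diag_lift = ch_rep \<phi> n f tr for \<phi> :: "'k::field_char_0 \<Rightarrow> 'r::ring_1" and n f tr +
  fixes \<alpha> :: "nat \<Rightarrow> 'k" and u :: 'r
  assumes inj_\<alpha>: "inj_on \<alpha> {..<n}" and rep_u: "f u = mat_diag n \<alpha>"
begin

definition proj :: "nat \<Rightarrow> 'r" where
  "proj i = aeval \<phi> (lagrange_basis \<alpha> {..<n} i) u"

lemma aeval_root_poly_lift: "f v = f u \<Longrightarrow> aeval \<phi> (root_poly \<alpha> {..<n}) v = 0"
  using aeval_root_poly_eq_0[OF inj_\<alpha>] rep_u by simp

lemma proj_eigen: "i < n \<Longrightarrow> u * proj i = \<phi> (\<alpha> i) * proj i"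
  unfolding proj_def by (rule lagrange_idempotent_eigen) (simp_all add: aeval_root_poly_lift)

lemma proj_commute: "proj i * u = u * proj i"
  unfolding proj_def by (rule aeval_commute[symmetric]) simp

lemma proj_idem: "i < n \<Longrightarrow> proj i * proj i = proj i"
  unfolding proj_def using inj_\<alpha>
  by (intro lagrange_idempotent_idem) (simp_all add: aeval_root_poly_lift)

lemma sum_proj: "(\<Sum>i<n. proj i) = 1"
  unfolding proj_def using inj_\<alpha> n_pos by (intro sum_lagrange_idempotents) auto

lemma rep_proj: "i < n \<Longrightarrow> f (proj i) = mat_unit n i i"
  unfolding proj_def rep_aeval_diag[OF rep_u] mat_diag_indicator[symmetric] mat_diag_eq_iff
  using inj_\<alpha> by (simp add: poly_lagrange_basis)

lemma kernel_idempotent_eq_0: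
  assumes "f e = 0\<^sub>m n n" "e * e = e" "u * e = \<phi> a * e"
  shows "e = 0"
proof -
  obtain b where b: "b \<notin> \<alpha> ` {..<n}"
    using ex_new_if_finite[OF infinite_UNIV_char_0] by blast
  define w where "w = u + \<phi> (b - a) * e"
  have "f w = f u"
    using assms(1) rep_carrier[of "\<phi> (b - a)"] rep_carrier[of u]
    by (simp add: w_def rep_add rep_mult right_mult_zero_mat)
  then have "aeval \<phi> (root_poly \<alpha> {..<n}) w = 0"
    by (rule aeval_root_poly_lift)
  moreover have "w * e = (\<phi> a + \<phi> (b - a)) * e"
    by (simp add: w_def distrib_right assms(2,3) mult.assoc)
  then have "w * e = \<phi> b * e"
    by (simp flip: phi_add)
  ultimately have "\<phi> (poly (root_poly \<alpha> {..<n}) b) * e = 0"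
    using aeval_eigen[of w e b "root_poly \<alpha> {..<n}"] by simp
  moreover have "poly (root_poly \<alpha> {..<n}) b \<noteq> 0"
    using b by (simp add: poly_root_poly_eq_0_iff)
  ultimately show ?thesis
    by (rule phi_cancel[rotated])
qed

lemma kernel_corner_regular:
  assumes i: "i < n" and x: "f x = 0\<^sub>m n n" "proj i * x = x"
    and ux: "u * x = \<phi> (\<alpha> i) * x" and xu: "x * u = \<phi> (\<alpha> i) * x"
  shows "\<exists>h. x * x * h = x \<and> x * h = h * x"
proof -
  define a where "a = \<alpha> i"
  define Q where "Q = root_poly \<alpha> ({..<n} - {i})"
  define q where "q = poly Q a"
  have "q \<noteq> 0"
    using inj_\<alpha> i by (auto simp: q_def Q_def a_def poly_root_poly_eq_0_iff dest: inj_onD)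
  have "[:- a, 1:] dvd Q - [:q:]"
    by (simp add: poly_eq_0_iff_dvd[symmetric] q_def)
  then obtain Q' where Q: "Q = [:q:] + [:- a, 1:] * Q'"
    by (metis dvdE diff_add_cancel add.commute)
  define v where "v = u + x"
  define H where "H = aeval \<phi> Q' v"
  have "f v = f u"
    using x(1) rep_carrier[of u] by (simp add: v_def rep_add)
  then have "aeval \<phi> ([:- a, 1:] * Q) v = 0"
    using aeval_root_poly_lift root_poly_remove[of "{..<n}" i \<alpha>] i by (simp add: Q_def a_def)
  have proj_v: "proj i * (v - \<phi> a) = x"
    using proj_eigen[OF i] proj_commute[of i]
    by (simp add: v_def a_def x(2) distrib_left right_diff_distrib phi_central)
  have x_v: "x * (v - \<phi> a) = x * x"
    by (simp add: v_def a_def distrib_left right_diff_distrib xu phi_central)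
  have "0 = proj i * aeval \<phi> ([:- a, 1:] * Q) v"
    by (simp only: \<open>aeval \<phi> ([:- a, 1:] * Q) v = 0\<close> mult_zero_right)
  also have "\<dots> = x * aeval \<phi> Q v"
    by (simp only: aeval_mult aeval_linear mult.assoc[symmetric] proj_v)
  also have "aeval \<phi> Q v = \<phi> q + (v - \<phi> a) * H"
    by (simp only: Q H_def aeval_add aeval_const aeval_mult aeval_linear)
  also have "x * (\<phi> q + (v - \<phi> a) * H) = \<phi> q * x + x * x * H"
    by (simp add: distrib_left phi_central x_v mult.assoc[symmetric])
  finally have xxH: "x * x * H = \<phi> (- q) * x"
    by (simp add: phi_minus eq_neg_iff_add_eq_0 add.commute)
  define h where "h = \<phi> (- inverse q) * H"
  have "x * x * h = \<phi> (- inverse q) * (x * x * H)"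
    by (simp add: h_def mult_phi_left_commute mult.assoc)
  also have "\<dots> = x"
    using \<open>q \<noteq> 0\<close> by (simp add: xxH mult.assoc[symmetric] phi_mult[symmetric] phi_1)
  finally have "x * x * h = x" .
  moreover have "x * H = H * x"
    unfolding H_def by (rule aeval_commute) (simp add: v_def distrib_left distrib_right ux xu)
  then have "x * h = h * x"
    by (simp add: h_def mult_phi_left_commute mult.assoc)
  ultimately show ?thesis
    by blast
qed

lemma kernel_corner_eq_0:
  assumes i: "i < n" and z: "f z = 0\<^sub>m n n"
  shows "proj i * z * proj i = 0"
proof -
  define x where "x = proj i * z * proj i"
  have fx: "f x = 0\<^sub>m n n"
    unfolding x_def using z by (rule rep_kernel_mult)
  have ex: "proj i * x = x" and xe: "x * proj i = x"
    unfolding x_def by (metis proj_idem[OF i] mult.assoc)+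
  have ux: "u * x = \<phi> (\<alpha> i) * x"
    unfolding x_def by (metis proj_eigen[OF i] mult.assoc)
  have xu: "x * u = \<phi> (\<alpha> i) * x"
    by (metis xe proj_commute proj_eigen[OF i] mult_phi_left_commute mult.assoc)
  obtain h where xxh: "x * x * h = x" and xh: "x * h = h * x"
    using kernel_corner_regular[OF i fx ex ux xu] by blast
  define e where "e = x * h"
  have "e * e = e"
    by (metis e_def xh xxh mult.assoc)
  moreover have "f e = 0\<^sub>m n n"
    using rep_kernel_mult[OF fx, of 1 h] by (simp add: e_def)
  moreover have "u * e = \<phi> (\<alpha> i) * e"
    by (simp add: e_def ux mult.assoc[symmetric])
  ultimately have "e = 0"
    by (intro kernel_idempotent_eq_0)
  then show ?thesis
    by (metis x_def xxh e_def mult.assoc mult_zero_right)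
qed

lemma kernel_off_diagonal_eq_0:
  assumes surj: "carrier_mat n n \<subseteq> range f"
    and i: "i < n" and j: "j < n" and z: "f z = 0\<^sub>m n n"
  shows "proj i * z * proj j = 0"
proof -
  obtain g where g: "f g = mat_unit n i j"
    using surj mat_unit_carrier by (metis rangeE subsetD)
  obtain g' where g': "f g' = mat_unit n j i"
    using surj mat_unit_carrier by (metis rangeE subsetD)
  have "f (proj i - g * proj j * g') = 0\<^sub>m n n"
    using i j by (simp add: rep_diff rep_mult g g' rep_proj mat_unit_mult)
  then have "proj i * (proj i - g * proj j * g') * proj i = 0"
    by (rule kernel_corner_eq_0[OF i])
  then have proj_i: "proj i = proj i * g * proj j * g' * proj i"
    by (simp add: proj_idem[OF i] right_diff_distrib left_diff_distrib mult.assoc)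
  have "proj j * (g' * proj i * z) * proj j = 0"
    using rep_kernel_mult[OF z, of "g' * proj i" 1]
    by (intro kernel_corner_eq_0[OF j]) (simp add: mult.assoc)
  then show ?thesis
    by (subst proj_i) (simp add: mult.assoc)
qed

lemma kernel_eq_0:
  assumes "carrier_mat n n \<subseteq> range f" and "f z = 0\<^sub>m n n"
  shows "z = 0"
proof -
  have "z = (\<Sum>i<n. proj i) * z * (\<Sum>j<n. proj j)"
    by (simp add: sum_proj)
  also have "\<dots> = 0"
    using kernel_off_diagonal_eq_0[OF assms(1) _ _ assms(2)]
    by (simp add: sum_distrib_left sum_distrib_right)
  finally show ?thesis .
qed

end

theorem corollary3p4:
  fixes \<phi> :: "'k::field_char_0 \<Rightarrow> 'r::ring_1" and tr :: "'r \<Rightarrow> 'k" and n :: nat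
  assumes "alg_closed TYPE('k)"
    and "k_algebra \<phi>"
    and "finitely_generated \<phi>"
    and "cayley_hamilton \<phi> tr n"
    and "quotient_iso_Mn \<phi> n (jacobson_radical TYPE('r))"
  shows "jacobson_radical TYPE('r) = {0}"
proof -
  obtain f :: "'r \<Rightarrow> 'k mat" where f: "mat_rep \<phi> n f" and surj: "range f = carrier_mat n n"
    and kernel: "{x. f x = 0\<^sub>m n n} = jacobson_radical TYPE('r)"
    using assms(2,5) unfolding quotient_iso_Mn_def mat_rep_def mat_rep_axioms_def k_alg_def
    by blast
  interpret ch_rep \<phi> n f tr
    using f assms(4) by (simp add: ch_rep_def ch_rep_axioms_def)
  obtain u where "f u = mat_diag n of_nat"
    using surj by (metis mat_diag_dim rangeE)
  then interpret diag_lift \<phi> n f tr of_nat u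
    by unfold_locales (simp_all add: inj_on_def)
  have "{x. f x = 0\<^sub>m n n} = {0}"
    using kernel_eq_0 rep_0 surj by auto
  then show ?thesis
    using kernel by simp
qed

end
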